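(* Let $\ell\ge 3$ be an integer, $\mathcal F=\{K_4,C_5,C_6,C_7,B_\ell\}$, and let $G$ be a graph. If $G$ contains one of the configurations (D2), (D3), (D5)–(D12) below and $H$ is the subgraph of $G$ induced by its vertices, then $H$ is enhanced weakly $(\mathcal F,4)$-boundary-reducible in $G$ with reduced part $R=V(H)$ (for a suitable nonempty $\mathrm{Fix}(H)\subseteq V(H)$). (D2) a triangle $T(3,3,3)$ or $T(3,3,4)$. (D3) $D_1=\mathrm{Dia}(6-3,4,3)$ and $D_2=\mathrm{Dia}(6-3,4,4)$ sharing their middle $6$-vertex and no other vertex. (D5) $\mathrm{Dia}(4-5,3,3)$. (D6) $\mathrm{Dia}(4-3,4,4)$. (D7) $\mathrm{Dia}(5-3,4,4)$ together with a $3$-vertex outside it adjacent to its middle $5$-vertex. (D8) $\mathrm{Dia}(5-5,3,3)$ together with a $3$-vertex outside it adjacent to one of its middle $5$-vertices. (D9) three $3$-vertices $u,v,w$ with $uv,vw\in E(G)$ and $uw\notin E(G)$. (D10) $\mathrm{Dia}(5-3,4,3)$. (D11) $T(5,3,3)$ together with a $3$-vertex outside it adjacent to its $5$-vertex. (D12) two triangles $T(6,3,3)$ sharing their $6$-vertex and no other vertex.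
   Context: $B_\ell$ is the book on $\ell$ vertices: an edge $xy$ plus $\ell-2$ further vertices each adjacent to exactly $x$ and $y$. All degrees are degrees in $G$; a $d$-vertex is a vertex of degree exactly $d$. $T(a,b,c)$ is a triangle with vertex degrees $a,b,c$. A diamond is a subgraph isomorphic to $K_4$ minus an edge; its two vertices of degree $3$ in it are middle vertices, the other two side vertices; $\mathrm{Dia}(a-b,c,d)$ is a diamond with middle vertex degrees $a,b$ and side vertex degrees $c,d$. For an induced subgraph $H$ of $G$ and $\emptyset\ne R\subseteq V(H)$, $\deg_R(v)$ is the degree of $v$ in $G[R]$. A set $I\subseteq V(H)$ is $\mathcal F$-free if adding to $H$ a new vertex adjacent exactly to $I$ creates no subgraph isomorphic to a member of $\mathcal F$. For $f:R\to\mathbb Z$, an $f$-assignment is a list assignment $L$ on $R$ with $|L(v)|\ge f(v)$; $f\downarrow v$ is $f$ changed to value $1$ at $v$; $1_I$ is the indicator of $I$. $H$ is enhanced weakly $(\mathcal F,k)$-boundary-reducible in $G$ with reduced part $R$ if there is a nonempty $\mathrm{Fix}(H)\subseteq R$ such that (FIX) every $v\in\mathrm{Fix}(H)$ satisfies $\deg_G(v)-\deg_R(v)\le k-3$ and $H[R]$ is properly $L$-colorable for every $((k-\deg_G+\deg_R)\downarrow v)$-assignment $L$; and (FORB) for every $\mathcal F$-free $I\subseteq R$ with $|I|\le k-3$, $H[R]$ is properly $L$-colorable for every $(k-\deg_G+\deg_R-1_I)$-assignment $L$. *)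

theory Defs
  imports Main
begin

definition simple_graph :: "'a set \<Rightarrow> ('a \<Rightarrow> 'a \<Rightarrow> bool) \<Rightarrow> bool" where
  "simple_graph V E \<longleftrightarrow> finite V \<and> (\<forall>u v. E u v \<longrightarrow> E v u) \<and> (\<forall>u. \<not> E u u)
     \<and> (\<forall>u v. E u v \<longrightarrow> u \<in> V \<and> v \<in> V)"

definition dg :: "'a set \<Rightarrow> ('a \<Rightarrow> 'a \<Rightarrow> bool) \<Rightarrow> 'a \<Rightarrow> int" where
  "dg R E v = int (card {u \<in> R. E v u})"

definition tri :: "('a \<Rightarrow> 'a \<Rightarrow> bool) \<Rightarrow> 'a \<Rightarrow> 'a \<Rightarrow> 'a \<Rightarrow> bool" where
  "tri E a b c \<longleftrightarrow> distinct [a, b, c] \<and> E a b \<and> E b c \<and> E a c"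

text \<open>A diamond (K4 minus an edge) as a subgraph, with middle vertices m1 m2
  and side vertices s1 s2.\<close>
definition dia :: "('a \<Rightarrow> 'a \<Rightarrow> bool) \<Rightarrow> 'a \<Rightarrow> 'a \<Rightarrow> 'a \<Rightarrow> 'a \<Rightarrow> bool" where
  "dia E m1 m2 s1 s2 \<longleftrightarrow> distinct [m1, m2, s1, s2] \<and> E m1 m2
     \<and> E m1 s1 \<and> E m1 s2 \<and> E m2 s1 \<and> E m2 s2"

definition has_K4 :: "'b set \<Rightarrow> ('b \<Rightarrow> 'b \<Rightarrow> bool) \<Rightarrow> bool" where
  "has_K4 W A \<longleftrightarrow> (\<exists>a b c d. distinct [a, b, c, d] \<and> {a, b, c, d} \<subseteq> W
     \<and> A a b \<and> A a c \<and> A a d \<and> A b c \<and> A b d \<and> A c d)"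

definition has_cycle :: "nat \<Rightarrow> 'b set \<Rightarrow> ('b \<Rightarrow> 'b \<Rightarrow> bool) \<Rightarrow> bool" where
  "has_cycle k W A \<longleftrightarrow> (\<exists>xs. length xs = k \<and> distinct xs \<and> set xs \<subseteq> W
     \<and> (\<forall>i<k. A (xs ! i) (xs ! ((i + 1) mod k))))"

definition has_book :: "nat \<Rightarrow> 'b set \<Rightarrow> ('b \<Rightarrow> 'b \<Rightarrow> bool) \<Rightarrow> bool" where
  "has_book l W A \<longleftrightarrow> (\<exists>x y P. x \<noteq> y \<and> x \<in> W \<and> y \<in> W \<and> A x y
     \<and> finite P \<and> P \<subseteq> W - {x, y} \<and> card P = l - 2 \<and> (\<forall>p\<in>P. A x p \<and> A y p))"

definition contains_F :: "nat \<Rightarrow> 'b set \<Rightarrow> ('b \<Rightarrow> 'b \<Rightarrow> bool) \<Rightarrow> bool" where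
  "contains_F l W A \<longleftrightarrow> has_K4 W A \<or> has_cycle 5 W A \<or> has_cycle 6 W A
     \<or> has_cycle 7 W A \<or> has_book l W A"

text \<open>H = G[Hs]; the graph obtained from H by adding a new vertex (None)
  adjacent exactly to I.\<close>
definition ext_vs :: "'a set \<Rightarrow> 'a option set" where
  "ext_vs Hs = insert None (Some ` Hs)"

definition ext_adj :: "('a \<Rightarrow> 'a \<Rightarrow> bool) \<Rightarrow> 'a set \<Rightarrow> 'a set \<Rightarrow> 'a option \<Rightarrow> 'a option \<Rightarrow> bool" where
  "ext_adj E Hs I x y = (case (x, y) of
       (Some u, Some v) \<Rightarrow> u \<in> Hs \<and> v \<in> Hs \<and> E u v
     | (None, Some v) \<Rightarrow> v \<in> I
     | (Some u, None) \<Rightarrow> u \<in> I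
     | (None, None) \<Rightarrow> False)"

text \<open>I is F-free, where Fcont W A says that the graph (W, A) contains a
  subgraph isomorphic to a member of F.\<close>
definition F_free :: "('a option set \<Rightarrow> ('a option \<Rightarrow> 'a option \<Rightarrow> bool) \<Rightarrow> bool)
    \<Rightarrow> ('a \<Rightarrow> 'a \<Rightarrow> bool) \<Rightarrow> 'a set \<Rightarrow> 'a set \<Rightarrow> bool" where
  "F_free Fcont E Hs I \<longleftrightarrow> I \<subseteq> Hs \<and> \<not> Fcont (ext_vs Hs) (ext_adj E Hs I)"

text \<open>f-assignment on R: lists are finite sets of colours (natural numbers).\<close>
definition f_assignment :: "'a set \<Rightarrow> ('a \<Rightarrow> int) \<Rightarrow> ('a \<Rightarrow> nat set) \<Rightarrow> bool" where
  "f_assignment R f L \<longleftrightarrow> (\<forall>v\<in>R. finite (L v) \<and> int (card (L v)) \<ge> f v)"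

definition L_colorable :: "('a \<Rightarrow> 'a \<Rightarrow> bool) \<Rightarrow> 'a set \<Rightarrow> ('a \<Rightarrow> nat set) \<Rightarrow> bool" where
  "L_colorable E R L \<longleftrightarrow> (\<exists>c. (\<forall>v\<in>R. c v \<in> L v)
     \<and> (\<forall>u\<in>R. \<forall>v\<in>R. E u v \<longrightarrow> c u \<noteq> c v))"

definition ewbr :: "'a set \<Rightarrow> ('a \<Rightarrow> 'a \<Rightarrow> bool) \<Rightarrow> 'a set
    \<Rightarrow> ('a option set \<Rightarrow> ('a option \<Rightarrow> 'a option \<Rightarrow> bool) \<Rightarrow> bool) \<Rightarrow> int \<Rightarrow> 'a set \<Rightarrow> bool" where
  "ewbr V E Hs Fcont k R \<longleftrightarrow> R \<noteq> {} \<and> R \<subseteq> Hs \<and>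
    (\<exists>Fix. Fix \<noteq> {} \<and> Fix \<subseteq> R \<and>
      (\<forall>v\<in>Fix. dg V E v - dg R E v \<le> k - 3 \<and>
         (\<forall>L. f_assignment R ((\<lambda>u. k - dg V E u + dg R E u)(v := 1)) L
              \<longrightarrow> L_colorable E R L)) \<and>
      (\<forall>I. F_free Fcont E Hs I \<and> I \<subseteq> R \<and> int (card I) \<le> k - 3 \<longrightarrow>
         (\<forall>L. f_assignment R (\<lambda>u. k - dg V E u + dg R E u - (if u \<in> I then 1 else 0)) L
              \<longrightarrow> L_colorable E R L)))"

definition configuration :: "'a set \<Rightarrow> ('a \<Rightarrow> 'a \<Rightarrow> bool) \<Rightarrow> 'a set \<Rightarrow> bool" where
  "configuration V E S \<longleftrightarrow>
    \<comment> \<open>(D2)\<close>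
    (\<exists>a b c. tri E a b c \<and> dg V E a = 3 \<and> dg V E b = 3 \<and> (dg V E c = 3 \<or> dg V E c = 4)
       \<and> S = {a, b, c}) \<or>
    \<comment> \<open>(D3)\<close>
    (\<exists>x b1 c1 d1 b2 c2 d2. dia E x b1 c1 d1 \<and> dia E x b2 c2 d2
       \<and> distinct [x, b1, c1, d1, b2, c2, d2]
       \<and> dg V E x = 6 \<and> dg V E b1 = 3 \<and> dg V E c1 = 4 \<and> dg V E d1 = 3
       \<and> dg V E b2 = 3 \<and> dg V E c2 = 4 \<and> dg V E d2 = 4
       \<and> S = {x, b1, c1, d1, b2, c2, d2}) \<or>
    \<comment> \<open>(D5)\<close>
    (\<exists>m1 m2 s1 s2. dia E m1 m2 s1 s2 \<and> dg V E m1 = 4 \<and> dg V E m2 = 5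
       \<and> dg V E s1 = 3 \<and> dg V E s2 = 3 \<and> S = {m1, m2, s1, s2}) \<or>
    \<comment> \<open>(D6)\<close>
    (\<exists>m1 m2 s1 s2. dia E m1 m2 s1 s2 \<and> dg V E m1 = 4 \<and> dg V E m2 = 3
       \<and> dg V E s1 = 4 \<and> dg V E s2 = 4 \<and> S = {m1, m2, s1, s2}) \<or>
    \<comment> \<open>(D7)\<close>
    (\<exists>m1 m2 s1 s2 w. dia E m1 m2 s1 s2 \<and> dg V E m1 = 5 \<and> dg V E m2 = 3
       \<and> dg V E s1 = 4 \<and> dg V E s2 = 4 \<and> w \<notin> {m1, m2, s1, s2} \<and> E w m1 \<and> dg V E w = 3
       \<and> S = {m1, m2, s1, s2, w}) \<or>
    \<comment> \<open>(D8)\<close>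
    (\<exists>m1 m2 s1 s2 w. dia E m1 m2 s1 s2 \<and> dg V E m1 = 5 \<and> dg V E m2 = 5
       \<and> dg V E s1 = 3 \<and> dg V E s2 = 3 \<and> w \<notin> {m1, m2, s1, s2} \<and> E w m1 \<and> dg V E w = 3
       \<and> S = {m1, m2, s1, s2, w}) \<or>
    \<comment> \<open>(D9)\<close>
    (\<exists>u v w. distinct [u, v, w] \<and> E u v \<and> E v w \<and> \<not> E u w
       \<and> dg V E u = 3 \<and> dg V E v = 3 \<and> dg V E w = 3 \<and> S = {u, v, w}) \<or>
    \<comment> \<open>(D10)\<close>
    (\<exists>m1 m2 s1 s2. dia E m1 m2 s1 s2 \<and> dg V E m1 = 5 \<and> dg V E m2 = 3
       \<and> dg V E s1 = 4 \<and> dg V E s2 = 3 \<and> S = {m1, m2, s1, s2}) \<or>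
    \<comment> \<open>(D11)\<close>
    (\<exists>a b c w. tri E a b c \<and> dg V E a = 5 \<and> dg V E b = 3 \<and> dg V E c = 3
       \<and> w \<notin> {a, b, c} \<and> E w a \<and> dg V E w = 3 \<and> S = {a, b, c, w}) \<or>
    \<comment> \<open>(D12)\<close>
    (\<exists>x a b c d. tri E x a b \<and> tri E x c d \<and> distinct [x, a, b, c, d]
       \<and> dg V E x = 6 \<and> dg V E a = 3 \<and> dg V E b = 3 \<and> dg V E c = 3 \<and> dg V E d = 3
       \<and> S = {x, a, b, c, d})"

end

theory Submission
  imports Defs
begin

text \<open>Each configuration H is reduced with Fix(H) a single vertex x that has at most one
  neighbour outside H. For k = 4 the sets I have at most one vertex, and I = {} or I = {x}
  only enlarge the lists of the Fix condition, so it remains to colour H from the Fix lists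
  and from the lists for I = {v}, v \<noteq> x. A vertex of degree d in G receives 4 - d colours
  plus its degree in H, so it can be coloured greedily as soon as at least d - 3 of its
  neighbours in H (one more if it lies in I) are still uncoloured; for almost every case an
  explicit colouring order with this property is given. The exception is I = {v} for the
  3-vertex v of the diamond in (D6) and (D7): then F-freeness of I excludes a K4, so the two
  side vertices are non-adjacent, and the diamond, being degree-choosable, can be coloured
  from lists of sizes 3, 3, 2, 2. Only the member K4 of F is ever used.\<close>

lemma simple_graph_symp: "simple_graph V E \<Longrightarrow> symp E"
  unfolding simple_graph_def by (blast intro: sympI)

lemma simple_graph_irreflp: "simple_graph V E \<Longrightarrow> irreflp E"
  unfolding simple_graph_def by (blast intro: irreflpI)

lemma tri_edges:
  assumes "symp E" "tri E a b c"
  shows "distinct [a, b, c]" "E a b" "E b a" "E b c" "E c b" "E a c" "E c a"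
  using assms(2) sympD[OF assms(1)] unfolding tri_def by blast+

lemma dia_edges:
  assumes "symp E" "dia E m1 m2 s1 s2"
  shows "distinct [m1, m2, s1, s2]" "E m1 m2" "E m2 m1" "E m1 s1" "E s1 m1" "E m1 s2" "E s2 m1"
    "E m2 s1" "E s1 m2" "E m2 s2" "E s2 m2"
  using assms(2) sympD[OF assms(1)] unfolding dia_def by blast+

section \<open>Greedy list colouring\<close>

lemma ex_notin_if_card_less: "finite B \<Longrightarrow> card B < card A \<Longrightarrow> \<exists>x\<in>A. x \<notin> B"
  by (meson card_mono not_le subsetI)

lemma L_colorable_insert:
  assumes sym: "symp E" and irr: "irreflp E" and "finite R"
    and col: "L_colorable E R L" and few: "card {u \<in> R. E v u} < card (L v)"
  shows "L_colorable E (insert v R) L"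
proof -
  obtain c where c_in: "\<forall>u\<in>R. c u \<in> L u" and c_proper: "\<forall>u\<in>R. \<forall>w\<in>R. E u w \<longrightarrow> c u \<noteq> c w"
    using col unfolding L_colorable_def by blast
  have "card (c ` {u \<in> R. E v u}) < card (L v)"
    by (rule le_less_trans[OF card_image_le few]) (use \<open>finite R\<close> in simp)
  moreover have "finite (c ` {u \<in> R. E v u})"
    using \<open>finite R\<close> by simp
  ultimately obtain x where x: "x \<in> L v" "x \<notin> c ` {u \<in> R. E v u}"
    using ex_notin_if_card_less by blast
  have "\<forall>u\<in>insert v R. (c(v := x)) u \<in> L u"
    using c_in x by simp
  moreover have "(c(v := x)) u \<noteq> (c(v := x)) w" if "u \<in> insert v R" "w \<in> insert v R" "E u w" for u w
  proof -
    have "u \<noteq> w"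
      using \<open>E u w\<close> irreflpD[OF irr] by blast
    moreover have "c w \<noteq> x" if "u = v" "w \<in> R"
      using x \<open>E u w\<close> that by blast
    moreover have "c u \<noteq> x" if "w = v" "u \<in> R"
      using x sympD[OF sym \<open>E u w\<close>] that by blast
    ultimately show ?thesis
      using c_proper that by auto
  qed
  ultimately show ?thesis
    unfolding L_colorable_def by blast
qed

text \<open>A colouring order with certificates: the vertices are coloured from left to right,
  starting from an already coloured set C, and in a pair (v, ws) the list ws consists of
  neighbours of v coloured after v. When v is coloured, at most dg S E v - length ws of its
  neighbours carry a colour; the very first vertex only needs a nonempty list.\<close>
fun greedy_order :: "('a \<Rightarrow> 'a \<Rightarrow> bool) \<Rightarrow> 'a set \<Rightarrow> ('a \<Rightarrow> int) \<Rightarrow> 'a set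
    \<Rightarrow> ('a \<times> 'a list) list \<Rightarrow> bool" where
  "greedy_order E S f C [] \<longleftrightarrow> True"
| "greedy_order E S f C ((v, ws) # rest) \<longleftrightarrow>
     v \<in> S - C \<and> distinct ws \<and> set ws \<subseteq> fst ` set rest \<and> (\<forall>w\<in>set ws. E v w)
     \<and> (dg S E v < f v + int (length ws) \<or> C = {} \<and> 0 < f v)
     \<and> greedy_order E S f (insert v C) rest"

lemma greedy_order_vertices: "greedy_order E S f C xs \<Longrightarrow> fst ` set xs \<subseteq> S - C"
proof (induction xs arbitrary: C)
  case (Cons p rest)
  then show ?case
    by (cases p) (simp, blast)
qed simp

lemma card_nbrs_plus_length_le_dg:
  assumes "finite S" "C \<subseteq> S" "set ws \<subseteq> S - C" "distinct ws" "\<forall>w\<in>set ws. E v w"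
  shows "int (card {u \<in> C. E v u}) + int (length ws) \<le> dg S E v"
proof -
  have "card ({u \<in> C. E v u} \<union> set ws) = card {u \<in> C. E v u} + length ws"
    using assms finite_subset[of C S] by (subst card_Un_disjoint) (auto simp: distinct_card)
  moreover have "card ({u \<in> C. E v u} \<union> set ws) \<le> card {u \<in> S. E v u}"
    using assms by (intro card_mono) auto
  ultimately show ?thesis
    unfolding dg_def by linarith
qed

lemma length_le_dg:
  "finite S \<Longrightarrow> set ws \<subseteq> S \<Longrightarrow> distinct ws \<Longrightarrow> \<forall>w\<in>set ws. E v w
    \<Longrightarrow> int (length ws) \<le> dg S E v"
  using card_nbrs_plus_length_le_dg[of S "{}" ws E v] by simp

lemma L_colorable_greedy_order:
  assumes fa: "f_assignment S f L" and sym: "symp E" and irr: "irreflp E" and "finite S"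
  shows "greedy_order E S f C xs \<Longrightarrow> C \<subseteq> S \<Longrightarrow> L_colorable E C L
    \<Longrightarrow> L_colorable E (C \<union> fst ` set xs) L"
proof (induction xs arbitrary: C)
  case Nil
  then show ?case by simp
next
  case (Cons p rest)
  obtain v ws where p: "p = (v, ws)" by fastforce
  have ord: "greedy_order E S f C ((v, ws) # rest)"
    using Cons.prems(1) p by simp
  then have v: "v \<in> S" "v \<notin> C" and ws: "set ws \<subseteq> fst ` set rest" "distinct ws" "\<forall>w\<in>set ws. E v w"
    and rest: "greedy_order E S f (insert v C) rest"
    by simp_all
  have "fst ` set rest \<subseteq> S - insert v C"
    using rest by (rule greedy_order_vertices)
  with ws have ws_later: "set ws \<subseteq> S - C"
    by blast
  have list_v: "f v \<le> int (card (L v))"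
    using fa v unfolding f_assignment_def by blast
  have "card {u \<in> C. E v u} < card (L v)"
  proof (cases "dg S E v < f v + int (length ws)")
    case True
    then show ?thesis
      using card_nbrs_plus_length_le_dg[of S C ws E v, OF \<open>finite S\<close> Cons.prems(2) ws_later ws(2,3)]
        list_v
      by linarith
  next
    case False
    with ord have "C = {}" "0 < f v"
      by simp_all
    with list_v show ?thesis
      by simp
  qed
  then have "L_colorable E (insert v C) L"
    using L_colorable_insert[OF sym irr _ Cons.prems(3)] Cons.prems(2) \<open>finite S\<close> finite_subset
    by blast
  then have "L_colorable E (insert v C \<union> fst ` set rest) L"
    using Cons.IH[OF rest] Cons.prems(2) v by simp
  then show ?case
    using p by simp
qed

lemma L_colorable_if_greedy_order:
  assumes "f_assignment S f L" "symp E" "irreflp E" "finite S"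
    and "greedy_order E S f {} xs" "fst ` set xs = S"
  shows "L_colorable E S L"
  using L_colorable_greedy_order[OF assms(1-4) assms(5)] assms(6)
  by (simp add: L_colorable_def)

lemma diamond_L_colorable:
  assumes sym: "symp E" and irr: "irreflp E" and D: "dia E m1 m2 s1 s2" and sides: "\<not> E s1 s2"
    and size: "3 \<le> card (L m1)" "3 \<le> card (L m2)" "2 \<le> card (L s1)" "2 \<le> card (L s2)"
  shows "L_colorable E {m1, m2, s1, s2} L"
proof -
  have fin: "finite (L m1)" "finite (L s1)" "finite (L s2)"
    using size by (auto intro: card_ge_0_finite)
  obtain a0 b0 where a0: "a0 \<in> L s1" and b0: "b0 \<in> L s2"
    using size(3,4) by fastforce
  have card_pair: "card {a, b} \<le> 2" for a b :: nat
    by (cases "a = b") simp_all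
  have card_two: "card (L m1 \<inter> {a, b}) \<le> 2" for a b
    using card_mono[of "{a, b}" "L m1 \<inter> {a, b}"] card_pair[of a b] by simp
  txt \<open>Choose side colours that block at most card (L m1) - 2 colours of m1.\<close>
  have "\<exists>a\<in>L s1. \<exists>b\<in>L s2. card (L m1 \<inter> {a, b}) + 1 < card (L m1)"
  proof (cases "L s1 \<inter> L s2 = {}")
    case False
    then obtain a where "a \<in> L s1" "a \<in> L s2"
      by blast
    moreover have "card (L m1 \<inter> {a, a}) + 1 < card (L m1)"
      using card_mono[of "{a}" "L m1 \<inter> {a}"] size(1) by simp
    ultimately show ?thesis
      by blast
  next
    case disjoint: True
    show ?thesis
    proof (cases "L s1 \<union> L s2 \<subseteq> L m1")
      case True
      have "card (L s1) + card (L s2) \<le> card (L m1)"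
        using card_mono[OF fin(1) True] card_Un_disjoint[OF fin(2,3) disjoint] by simp
      then have "card (L m1 \<inter> {a0, b0}) + 1 < card (L m1)"
        using size card_two[of a0 b0] by linarith
      with a0 b0 show ?thesis
        by blast
    next
      case False
      then obtain c where "c \<in> L s1 \<union> L s2" "c \<notin> L m1"
        by blast
      have few: "card (L m1 \<inter> {a, b}) + 1 < card (L m1)" if "a = c \<or> b = c" for a b
      proof -
        have "card (L m1 \<inter> {a, b}) \<le> 1"
          using that \<open>c \<notin> L m1\<close> card_mono[of "{a}" "L m1 \<inter> {a, b}"]
            card_mono[of "{b}" "L m1 \<inter> {a, b}"]
          by (auto simp: Int_insert_right)
        with size(1) show ?thesis
          by linarith
      qed
      from \<open>c \<in> L s1 \<union> L s2\<close> show ?thesis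
      proof
        assume "c \<in> L s1"
        with b0 few[of c b0] show ?thesis
          by blast
      next
        assume "c \<in> L s2"
        with a0 few[of a0 c] show ?thesis
          by blast
      qed
    qed
  qed
  then obtain a b where a: "a \<in> L s1" and b: "b \<in> L s2"
    and m1_free: "card (L m1 \<inter> {a, b}) + 1 < card (L m1)"
    by blast
  obtain y where y: "y \<in> L m2" "y \<notin> {a, b}"
    using ex_notin_if_card_less[of "{a, b}" "L m2"] size(2) card_pair[of a b] by force
  have "card (L m1 \<inter> {a, b, y}) \<le> card ((L m1 \<inter> {a, b}) \<union> {y})"
    by (rule card_mono) auto
  also have "\<dots> \<le> card (L m1 \<inter> {a, b}) + 1"
    using card_Un_le[of "L m1 \<inter> {a, b}" "{y}"] by simp
  finally have "card (L m1 \<inter> {a, b, y}) \<le> card (L m1 \<inter> {a, b}) + 1" .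
  then obtain x where x: "x \<in> L m1" "x \<notin> L m1 \<inter> {a, b, y}"
    using ex_notin_if_card_less[of "L m1 \<inter> {a, b, y}" "L m1"] m1_free by force
  define c where "c = (\<lambda>_. b)(m1 := x, m2 := y, s1 := a)"
  note adj = dia_edges[OF sym D]
  have "\<forall>u\<in>{m1, m2, s1, s2}. c u \<in> L u"
    using adj a b x y unfolding c_def by auto
  moreover have "c u \<noteq> c w" if "E u w" "u \<in> {m1, m2, s1, s2}" "w \<in> {m1, m2, s1, s2}" for u w
    using that adj x y sides sympD[OF sym, of s2 s1] irreflpD[OF irr] unfolding c_def by auto
  ultimately show ?thesis
    unfolding L_colorable_def by blast
qed

section \<open>Boundary reducibility for k = 4\<close>

lemma f_assignment_mono:
  "f_assignment R g L \<Longrightarrow> (\<And>v. v \<in> R \<Longrightarrow> f v \<le> g v) \<Longrightarrow> f_assignment R f L"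
  unfolding f_assignment_def by (meson order_trans)

lemma ewbr_4_by_fixed_vertex:
  assumes "finite S" "x \<in> S" and boundary: "dg V E x - dg S E x \<le> 1"
    and fixed: "\<And>L. f_assignment S ((\<lambda>u. 4 - dg V E u + dg S E u)(x := 1)) L
      \<Longrightarrow> L_colorable E S L"
    and single: "\<And>v L. v \<in> S \<Longrightarrow> v \<noteq> x \<Longrightarrow> F_free Fc E S {v}
      \<Longrightarrow> f_assignment S (\<lambda>u. 4 - dg V E u + dg S E u - (if u = v then 1 else 0)) L
      \<Longrightarrow> L_colorable E S L"
  shows "ewbr V E S Fc 4 S"
  unfolding ewbr_def
proof (intro conjI exI[of _ "{x}"] ballI allI impI)
  show "S \<noteq> {}" "S \<subseteq> S" "{x} \<noteq> {}" "{x} \<subseteq> S"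
    using \<open>x \<in> S\<close> by auto
next
  fix v L
  assume "v \<in> {x}"
  then show "dg V E v - dg S E v \<le> 4 - 3"
    using boundary by simp
  assume "f_assignment S ((\<lambda>u. 4 - dg V E u + dg S E u)(v := 1)) L"
  with \<open>v \<in> {x}\<close> show "L_colorable E S L"
    using fixed by simp
next
  fix I L
  assume I: "F_free Fc E S I \<and> I \<subseteq> S \<and> int (card I) \<le> 4 - 3"
    and fa: "f_assignment S (\<lambda>u. 4 - dg V E u + dg S E u - (if u \<in> I then 1 else 0)) L"
  have "finite I" "card I \<le> Suc 0"
    using I \<open>finite S\<close> finite_subset by simp_all blast
  then have at_most_one: "\<forall>a\<in>I. \<forall>b\<in>I. a = b"
    by (simp add: card_le_Suc0_iff_eq)
  show "L_colorable E S L"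
  proof (cases "I \<subseteq> {x}")
    case True
    show ?thesis
    proof (rule fixed, rule f_assignment_mono[OF fa])
      fix u
      show "((\<lambda>u. 4 - dg V E u + dg S E u)(x := 1)) u
        \<le> 4 - dg V E u + dg S E u - (if u \<in> I then 1 else 0)"
        using True boundary by auto
    qed
  next
    case False
    then obtain v where "v \<in> I" "v \<noteq> x"
      by blast
    with at_most_one have "I = {v}"
      by blast
    with I fa \<open>v \<noteq> x\<close> show ?thesis
      by (intro single) auto
  qed
qed

lemma ewbr_4_by_greedy_orders:
  assumes sym: "symp E" and irr: "irreflp E" and "finite S" "x \<in> S"
    and boundary: "dg V E x - dg S E x \<le> 1"
    and fixed: "greedy_order E S ((\<lambda>u. 4 - dg V E u + dg S E u)(x := 1)) {} xs" "fst ` set xs = S"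
    and single: "\<And>v. v \<in> S \<Longrightarrow> v \<noteq> x \<Longrightarrow>
      greedy_order E S (\<lambda>u. 4 - dg V E u + dg S E u - (if u = v then 1 else 0)) {} (ys v)
      \<and> fst ` set (ys v) = S"
  shows "ewbr V E S Fc 4 S"
proof (rule ewbr_4_by_fixed_vertex[OF \<open>finite S\<close> \<open>x \<in> S\<close> boundary])
  show "L_colorable E S L" if "f_assignment S ((\<lambda>u. 4 - dg V E u + dg S E u)(x := 1)) L" for L
    using L_colorable_if_greedy_order[OF that sym irr \<open>finite S\<close> fixed] .
  show "L_colorable E S L"
    if "v \<in> S" "v \<noteq> x"
      and "f_assignment S (\<lambda>u. 4 - dg V E u + dg S E u - (if u = v then 1 else 0)) L" for v L
    using L_colorable_if_greedy_order[OF that(3) sym irr \<open>finite S\<close>] single[OF that(1,2)] by blast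
qed

lemma F_free_dia_sides_nonadjacent:
  assumes "F_free (contains_F l) E S I" "dia E m1 m2 s1 s2" "{m1, m2, s1, s2} \<subseteq> S"
  shows "\<not> E s1 s2"
proof
  assume "E s1 s2"
  with assms(2,3) have "has_K4 (ext_vs S) (ext_adj E S I)"
    unfolding has_K4_def dia_def
    by (intro exI[of _ "Some m1"] exI[of _ "Some m2"] exI[of _ "Some s1"] exI[of _ "Some s2"])
      (auto simp: ext_vs_def ext_adj_def)
  with assms(1) show False
    unfolding F_free_def contains_F_def by blast
qed

section \<open>The configurations\<close>

lemma ewbr_D2:
  assumes sym: "symp E" and irr: "irreflp E"
    and T: "tri E a b c" and deg: "dg V E a \<le> 3" "dg V E b \<le> 3" "dg V E c \<le> 4"
  shows "ewbr V E {a, b, c} Fc 4 {a, b, c}"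
proof -
  note adj = tri_edges[OF sym T]
  show ?thesis
  proof (rule ewbr_4_by_greedy_orders[OF sym irr, where x = a
      and xs = "[(a, []), (c, [b]), (b, [])]"
      and ys = "\<lambda>z. if z = b then [(b, [c, a]), (c, [a]), (a, [])]
        else [(c, [a, b]), (a, [b]), (b, [])]"])
    show "dg V E a - dg {a, b, c} E a \<le> 1"
      using length_le_dg[of "{a, b, c}" "[b, c]" E a] adj deg by auto
  qed (use adj deg in auto)
qed

lemma ewbr_D3:
  assumes sym: "symp E" and irr: "irreflp E"
    and D: "dia E x b1 c1 d1" "dia E x b2 c2 d2" "distinct [x, b1, c1, d1, b2, c2, d2]"
    and deg: "dg V E x \<le> 6" "dg V E b1 \<le> 3" "dg V E c1 \<le> 4" "dg V E d1 \<le> 3"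
      "dg V E b2 \<le> 3" "dg V E c2 \<le> 4" "dg V E d2 \<le> 4"
  shows "ewbr V E {x, b1, c1, d1, b2, c2, d2} Fc 4 {x, b1, c1, d1, b2, c2, d2}"
proof -
  note adj = dia_edges[OF sym D(1)] dia_edges[OF sym D(2)] D(3)
  show ?thesis
  proof (rule ewbr_4_by_greedy_orders[OF sym irr, where x = x
      and xs = "[(x, []), (c1, [b1]), (b1, [d1]), (d1, []), (c2, [b2]), (d2, [b2]), (b2, [])]"
      and ys = "\<lambda>z.
        if z = b1 then [(x, [c1, b1, d1, c2, d2, b2]), (c1, [b1]), (b1, [d1]), (d1, []),
          (c2, [b2]), (d2, [b2]), (b2, [])]
        else if z = c1 then [(c1, [x, b1]), (x, [b1, d1, c2, d2, b2]), (b1, [d1]), (d1, []),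
          (c2, [b2]), (d2, [b2]), (b2, [])]
        else if z = d1 then [(x, [c1, d1, b1, c2, d2, b2]), (c1, [b1]), (d1, [b1]), (b1, []),
          (c2, [b2]), (d2, [b2]), (b2, [])]
        else if z = b2 then [(b2, [c2, d2, x]), (c2, [x]), (d2, [x]), (x, [c1, b1, d1]),
          (c1, [b1]), (b1, [d1]), (d1, [])]
        else if z = c2 then [(b1, [c1, x, d1]), (c1, [x]), (c2, [x, b2]), (x, [d1, d2, b2]),
          (d1, []), (d2, [b2]), (b2, [])]
        else [(b1, [c1, x, d1]), (c1, [x]), (d2, [x, b2]), (x, [d1, c2, b2]),
          (d1, []), (c2, [b2]), (b2, [])]"])
    show "dg V E x - dg {x, b1, c1, d1, b2, c2, d2} E x \<le> 1"
      using length_le_dg[of "{x, b1, c1, d1, b2, c2, d2}" "[b1, c1, d1, b2, c2, d2]" E x] adj deg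
      by auto
  qed (use adj deg in auto)
qed

lemma ewbr_D5:
  assumes sym: "symp E" and irr: "irreflp E"
    and D: "dia E m1 m2 s1 s2"
    and deg: "dg V E m1 \<le> 4" "dg V E m2 \<le> 5" "dg V E s1 \<le> 3" "dg V E s2 \<le> 3"
  shows "ewbr V E {m1, m2, s1, s2} Fc 4 {m1, m2, s1, s2}"
proof -
  note adj = dia_edges[OF sym D]
  show ?thesis
  proof (rule ewbr_4_by_greedy_orders[OF sym irr, where x = m1
      and xs = "[(m1, []), (m2, [s1, s2]), (s1, []), (s2, [])]"
      and ys = "\<lambda>z. if z = m2 then [(m2, [m1, s1, s2]), (m1, [s1, s2]), (s1, []), (s2, [])]
        else if z = s1 then [(m2, [s1, m1, s2]), (s1, [m1]), (m1, [s2]), (s2, [])]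
        else [(m2, [s2, m1, s1]), (s2, [m1]), (m1, [s1]), (s1, [])]"])
    show "dg V E m1 - dg {m1, m2, s1, s2} E m1 \<le> 1"
      using length_le_dg[of "{m1, m2, s1, s2}" "[m2, s1, s2]" E m1] adj deg by auto
  qed (use adj deg in auto)
qed

lemma ewbr_D6:
  assumes sym: "symp E" and irr: "irreflp E" and D: "dia E m1 m2 s1 s2"
    and deg: "dg V E m1 \<le> 4" "dg V E m2 \<le> 3" "dg V E s1 \<le> 4" "dg V E s2 \<le> 4"
  shows "ewbr V E {m1, m2, s1, s2} (contains_F l) 4 {m1, m2, s1, s2}"
proof -
  note adj = dia_edges[OF sym D]
  show ?thesis
  proof (rule ewbr_4_by_fixed_vertex[of _ m1], goal_cases)
    case 3
    show ?case
      using length_le_dg[of "{m1, m2, s1, s2}" "[m2, s1, s2]" E m1] adj deg by auto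
  next
    case (4 L)
    show ?case
      by (rule L_colorable_if_greedy_order[OF 4 sym irr,
            where xs = "[(m1, []), (s1, [m2]), (s2, [m2]), (m2, [])]"])
        (use adj deg in auto)
  next
    case (5 v L)
    then consider "v = m2" | "v = s1" | "v = s2"
      by blast
    then show ?case
    proof cases
      case 1
      have size: "4 - dg V E u + dg {m1, m2, s1, s2} E u - (if u = m2 then 1 else 0)
          \<le> int (card (L u))"
        if "u \<in> {m1, m2, s1, s2}" for u
        using 5(4) that 1 unfolding f_assignment_def by blast
      show ?thesis
      proof (rule diamond_L_colorable[OF sym irr D])
        show "\<not> E s1 s2"
          using F_free_dia_sides_nonadjacent[OF 5(3)[unfolded 1] D] by simp
        show "3 \<le> card (L m1)"
          using size[of m1] length_le_dg[of "{m1, m2, s1, s2}" "[m2, s1, s2]" E m1] adj deg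
          by auto
        show "3 \<le> card (L m2)"
          using size[of m2] length_le_dg[of "{m1, m2, s1, s2}" "[m1, s1, s2]" E m2] adj deg
          by auto
        show "2 \<le> card (L s1)"
          using size[of s1] length_le_dg[of "{m1, m2, s1, s2}" "[m1, m2]" E s1] adj deg
          by auto
        show "2 \<le> card (L s2)"
          using size[of s2] length_le_dg[of "{m1, m2, s1, s2}" "[m1, m2]" E s2] adj deg
          by auto
      qed
    next
      case 2
      show ?thesis
        by (rule L_colorable_if_greedy_order[OF 5(4) sym irr,
              where xs = "[(s1, [m1, m2]), (m1, [s2, m2]), (s2, [m2]), (m2, [])]"])
          (use adj deg 2 in auto)
    next
      case 3
      show ?thesis
        by (rule L_colorable_if_greedy_order[OF 5(4) sym irr,
              where xs = "[(s1, [m1, m2]), (s2, [m1, m2]), (m1, [m2]), (m2, [])]"])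
          (use adj deg 3 in auto)
    qed
  qed simp_all
qed

lemma ewbr_D7:
  assumes sym: "symp E" and irr: "irreflp E"
    and D: "dia E m1 m2 s1 s2" "w \<notin> {m1, m2, s1, s2}" "E w m1"
    and deg: "dg V E m1 \<le> 5" "dg V E m2 \<le> 3" "dg V E s1 \<le> 4" "dg V E s2 \<le> 4"
      "dg V E w \<le> 3"
  shows "ewbr V E {m1, m2, s1, s2, w} (contains_F l) 4 {m1, m2, s1, s2, w}"
proof -
  note adj = dia_edges[OF sym D(1)] D(2,3) sympD[OF sym D(3)]
  show ?thesis
  proof (rule ewbr_4_by_fixed_vertex[of _ m1], goal_cases)
    case 3
    show ?case
      using length_le_dg[of "{m1, m2, s1, s2, w}" "[m2, s1, s2, w]" E m1] adj deg by auto
  next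
    case (4 L)
    show ?case
      by (rule L_colorable_if_greedy_order[OF 4 sym irr,
            where xs = "[(m1, []), (s1, [m2]), (s2, [m2]), (m2, []), (w, [])]"])
        (use adj deg in auto)
  next
    case (5 v L)
    then consider "v = m2" | "v = s1" | "v = s2" | "v = w"
      by blast
    then show ?case
    proof cases
      case 1
      have size: "4 - dg V E u + dg {m1, m2, s1, s2, w} E u - (if u = m2 then 1 else 0)
          \<le> int (card (L u))"
        if "u \<in> {m1, m2, s1, s2, w}" for u
        using 5(4) that 1 unfolding f_assignment_def by blast
      have diamond: "L_colorable E {m1, m2, s1, s2} L"
      proof (rule diamond_L_colorable[OF sym irr D(1)])
        show "\<not> E s1 s2"
          using F_free_dia_sides_nonadjacent[OF 5(3)[unfolded 1] D(1)] by simp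
        show "3 \<le> card (L m1)"
          using size[of m1] length_le_dg[of "{m1, m2, s1, s2, w}" "[m2, s1, s2, w]" E m1] adj deg
          by auto
        show "3 \<le> card (L m2)"
          using size[of m2] length_le_dg[of "{m1, m2, s1, s2, w}" "[m1, s1, s2]" E m2] adj deg
          by auto
        show "2 \<le> card (L s1)"
          using size[of s1] length_le_dg[of "{m1, m2, s1, s2, w}" "[m1, m2]" E s1] adj deg
          by auto
        show "2 \<le> card (L s2)"
          using size[of s2] length_le_dg[of "{m1, m2, s1, s2, w}" "[m1, m2]" E s2] adj deg
          by auto
      qed
      have "L_colorable E ({m1, m2, s1, s2} \<union> fst ` set [(w, [] :: 'a list)]) L"
        by (rule L_colorable_greedy_order[OF 5(4) sym irr]) (use diamond adj deg 1 in auto)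
      then show ?thesis
        by (simp add: insert_commute)
    next
      case 2
      show ?thesis
        by (rule L_colorable_if_greedy_order[OF 5(4) sym irr,
              where xs = "[(s1, [m1, m2]), (m1, [s2, m2, w]), (s2, [m2]), (m2, []), (w, [])]"])
          (use adj deg 2 in auto)
    next
      case 3
      show ?thesis
        by (rule L_colorable_if_greedy_order[OF 5(4) sym irr,
              where xs = "[(s1, [m1, m2]), (s2, [m1, m2]), (m1, [m2, w]), (m2, []), (w, [])]"])
          (use adj deg 3 in auto)
    next
      case 4
      show ?thesis
        by (rule L_colorable_if_greedy_order[OF 5(4) sym irr,
              where xs = "[(s1, [m1, m2]), (w, [m1]), (m1, [s2, m2]), (s2, [m2]), (m2, [])]"])
          (use adj deg 4 in auto)
    qed
  qed simp_all
qed

lemma ewbr_D8: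
  assumes sym: "symp E" and irr: "irreflp E"
    and D: "dia E m1 m2 s1 s2" "w \<notin> {m1, m2, s1, s2}" "E w m1"
    and deg: "dg V E m1 \<le> 5" "dg V E m2 \<le> 5" "dg V E s1 \<le> 3" "dg V E s2 \<le> 3"
      "dg V E w \<le> 3"
  shows "ewbr V E {m1, m2, s1, s2, w} Fc 4 {m1, m2, s1, s2, w}"
proof -
  note adj = dia_edges[OF sym D(1)] D(2,3) sympD[OF sym D(3)]
  show ?thesis
  proof (rule ewbr_4_by_greedy_orders[OF sym irr, where x = m1
      and xs = "[(m1, []), (m2, [s1, s2]), (s1, []), (s2, []), (w, [])]"
      and ys = "\<lambda>z.
        if z = m2 then [(m2, [m1, s1, s2]), (m1, [s1, s2, w]), (s1, []), (s2, []), (w, [])]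
        else if z = s1 then [(m2, [s1, m1, s2]), (s1, [m1]), (m1, [s2, w]), (s2, []), (w, [])]
        else if z = s2 then [(m2, [s2, m1, s1]), (s2, [m1]), (m1, [s1, w]), (s1, []), (w, [])]
        else [(m2, [m1, s1, s2]), (w, [m1]), (m1, [s1, s2]), (s1, []), (s2, [])]"])
    show "dg V E m1 - dg {m1, m2, s1, s2, w} E m1 \<le> 1"
      using length_le_dg[of "{m1, m2, s1, s2, w}" "[m2, s1, s2, w]" E m1] adj deg by auto
  qed (use adj deg in auto)
qed

lemma ewbr_D9:
  assumes sym: "symp E" and irr: "irreflp E"
    and P: "distinct [u, v, w]" "E u v" "E v w"
    and deg: "dg V E u \<le> 3" "dg V E v \<le> 3" "dg V E w \<le> 3"
  shows "ewbr V E {u, v, w} Fc 4 {u, v, w}"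
proof -
  note adj = P sympD[OF sym P(2)] sympD[OF sym P(3)]
  show ?thesis
  proof (rule ewbr_4_by_greedy_orders[OF sym irr, where x = v
      and xs = "[(v, []), (u, []), (w, [])]"
      and ys = "\<lambda>z. if z = u then [(u, [v]), (v, [w]), (w, [])]
        else [(u, [v]), (w, [v]), (v, [])]"])
    show "dg V E v - dg {u, v, w} E v \<le> 1"
      using length_le_dg[of "{u, v, w}" "[u, w]" E v] adj deg by auto
  qed (use adj deg in auto)
qed

lemma ewbr_D10:
  assumes sym: "symp E" and irr: "irreflp E"
    and D: "dia E m1 m2 s1 s2"
    and deg: "dg V E m1 \<le> 5" "dg V E m2 \<le> 3" "dg V E s1 \<le> 4" "dg V E s2 \<le> 3"
  shows "ewbr V E {m1, m2, s1, s2} Fc 4 {m1, m2, s1, s2}"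
proof -
  note adj = dia_edges[OF sym D]
  show ?thesis
  proof (rule ewbr_4_by_greedy_orders[OF sym irr, where x = s2
      and xs = "[(s2, []), (m1, [s1, m2]), (s1, [m2]), (m2, [])]"
      and ys = "\<lambda>z. if z = m1 then [(m1, [s1, m2, s2]), (s1, [m2]), (m2, [s2]), (s2, [])]
        else if z = m2 then [(m1, [s1, m2, s2]), (s1, [m2]), (m2, [s2]), (s2, [])]
        else [(s1, [m1, m2]), (m1, [m2, s2]), (m2, [s2]), (s2, [])]"])
    show "dg V E s2 - dg {m1, m2, s1, s2} E s2 \<le> 1"
      using length_le_dg[of "{m1, m2, s1, s2}" "[m1, m2]" E s2] adj deg by auto
  qed (use adj deg in auto)
qed

lemma ewbr_D11:
  assumes sym: "symp E" and irr: "irreflp E"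
    and T: "tri E a b c" "w \<notin> {a, b, c}" "E w a"
    and deg: "dg V E a \<le> 5" "dg V E b \<le> 3" "dg V E c \<le> 3" "dg V E w \<le> 3"
  shows "ewbr V E {a, b, c, w} Fc 4 {a, b, c, w}"
proof -
  note adj = tri_edges[OF sym T(1)] T(2,3) sympD[OF sym T(3)]
  show ?thesis
  proof (rule ewbr_4_by_greedy_orders[OF sym irr, where x = b
      and xs = "[(b, []), (a, [c, w]), (c, []), (w, [])]"
      and ys = "\<lambda>z. if z = a then [(a, [b, c, w]), (b, [c]), (c, []), (w, [])]
        else if z = c then [(a, [c, b, w]), (c, [b]), (b, []), (w, [])]
        else [(w, [a]), (a, [b, c]), (b, [c]), (c, [])]"])
    show "dg V E b - dg {a, b, c, w} E b \<le> 1"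
      using length_le_dg[of "{a, b, c, w}" "[a, c]" E b] adj deg by auto
  qed (use adj deg in auto)
qed

lemma ewbr_D12:
  assumes sym: "symp E" and irr: "irreflp E"
    and T: "tri E x a b" "tri E x c d" "distinct [x, a, b, c, d]"
    and deg: "dg V E x \<le> 6" "dg V E a \<le> 3" "dg V E b \<le> 3" "dg V E c \<le> 3"
      "dg V E d \<le> 3"
  shows "ewbr V E {x, a, b, c, d} Fc 4 {x, a, b, c, d}"
proof -
  note adj = tri_edges[OF sym T(1)] tri_edges[OF sym T(2)] T(3)
  show ?thesis
  proof (rule ewbr_4_by_greedy_orders[OF sym irr, where x = a
      and xs = "[(a, []), (x, [b, c, d]), (b, []), (c, [d]), (d, [])]"
      and ys = "\<lambda>z. if z = x then [(x, [a, b, c, d]), (a, [b]), (b, []), (c, [d]), (d, [])]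
        else if z = b then [(x, [b, a, c, d]), (b, [a]), (a, []), (c, [d]), (d, [])]
        else if z = c then [(x, [a, b, c, d]), (a, [b]), (b, []), (c, [d]), (d, [])]
        else [(x, [a, b, d, c]), (a, [b]), (b, []), (d, [c]), (c, [])]"])
    show "dg V E a - dg {x, a, b, c, d} E a \<le> 1"
      using length_le_dg[of "{x, a, b, c, d}" "[x, b]" E a] adj deg by auto
  qed (use adj deg in auto)
qed

theorem mainTheorem9:
  fixes V :: "'a set" and E :: "'a \<Rightarrow> 'a \<Rightarrow> bool" and l :: nat and S :: "'a set"
  assumes "simple_graph V E"
    and "l \<ge> 3"
    and "configuration V E S"
  shows "ewbr V E S (contains_F l) 4 S"
proof -
  have sym: "symp E" and irr: "irreflp E"
    using assms(1) by (simp_all add: simple_graph_symp simple_graph_irreflp)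
  from assms(3) show ?thesis
    unfolding configuration_def
    by (elim disjE exE conjE) (simp_all add: ewbr_D2[OF sym irr] ewbr_D3[OF sym irr]
        ewbr_D5[OF sym irr] ewbr_D6[OF sym irr] ewbr_D7[OF sym irr] ewbr_D8[OF sym irr]
        ewbr_D9[OF sym irr] ewbr_D10[OF sym irr] ewbr_D11[OF sym irr] ewbr_D12[OF sym irr])
qed

end
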